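(* Let $X$ be a nonnegative integer-valued random variable whose PGF $X(z)$ has radius of convergence $r>1$, mean $\mu=X'(1)>0$, such that $|X(z)|<X(r_1)$ whenever $|z|=r_1$, $z\ne r_1$, $r_1\in(0,r)$. For positive integers $n,s$ let $A(z)=X(z)^n$, with $n\mu<s$ and degree of $X(z)$ larger than $s/n$; write $n\mu/s=1-\gamma/\sqrt s$ (so $\gamma=(s-n\mu)/\sqrt{s}>0$). Let $z_1,\dots,z_{s-1}$ be the zeros of $z^s-A(z)$ in $|z|<1$ and $Z_0$ the zero of minimal modulus in $1<|z|<r$. For $Z\in\mathbb{C}$, $|Z|\ge1$, let $$P(Z)=\prod_{j=1}^{s-1}(1-z_j/Z)=\exp\Big(\sum_{j=1}^{s-1}\ln(1-z_j/Z)\Big)$$ (principal logarithm), and for $\varepsilon>0$ with $1<1+\varepsilon<Z_0$ let $$I(Z)=\frac{1}{2\pi i}\int_{|z|=1+\varepsilon}\frac{\ln(1-z^{-s}A(z))}{Z-z}\,dz.$$ Then, for $|Z|\ge1$, $$\ln P(Z)=\begin{cases}-\ln(1-Z^{-1})+I(Z), & 1+\varepsilon<|Z|<r,\\ -\ln(1-Z^{-1})+\ln(1-Z^{-s}A(Z))+I(Z), & 1<|Z|<1+\varepsilon,\\ \ln(\gamma\sqrt s)+I(1), & Z=1.\end{cases}$$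
   Context: Under the assumptions, $z^s-A(z)$ has exactly the zeros $z_0=1,z_1,\dots,z_{s-1}$ in $|z|\le1$ (with $z_1,\dots,z_{s-1}$ in $|z|<1$), and $Z_0>1$ is real. *)

theory Defs
  imports "HOL-Probability.Probability_Mass_Function" "HOL-Complex_Analysis.Complex_Analysis"
begin

definition pgf :: "nat pmf \<Rightarrow> complex \<Rightarrow> complex" where
  "pgf X z = (\<Sum>k. complex_of_real (pmf X k) * z ^ k)"

end

theory Submission
  imports Defs
begin

text \<open>The zeros of the kernel \<open>z^s - A(z)\<close> in the disc \<open>|z| < |Z\<^sub>0|\<close> are \<open>1\<close> and the \<open>z\<^sub>j\<close>,
  so dividing the kernel by \<open>(z - 1) \<Prod>\<^sub>j (z - z\<^sub>j)\<close> leaves a zero-free holomorphic function with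
  a holomorphic logarithm \<open>M\<close> on that disc. On the annulus \<open>1 < |z| < |Z\<^sub>0|\<close> this splits
  \<open>ln (1 - z\<^sup>-\<^sup>s A(z))\<close> into \<open>ln ((1 - 1/z) \<Prod>\<^sub>j (1 - z\<^sub>j/z))\<close>, a holomorphic function of \<open>1/z\<close>
  vanishing at infinity, plus \<open>M(z)\<close>, after absorbing a constant multiple of \<open>2\<pi>i\<close> into \<open>M\<close>.
  In the Cauchy integral over \<open>|z| = 1 + \<epsilon>\<close> the first part contributes its value at \<open>Z\<close> for
  \<open>Z\<close> outside the circle and nothing inside, and \<open>M\<close> contributes \<open>-M(Z)\<close> inside and nothing outside.
  At \<open>Z = 1\<close>, \<open>exp (M(1) + ln P(1))\<close> is the derivative \<open>s - n\<mu> = \<gamma>\<surd>s\<close> of the kernel at \<open>1\<close>,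
  and \<open>M(1) + ln P(1)\<close> is real, being a limit of real values along \<open>(1, 1 + \<epsilon>)\<close>.\<close>

lemma one_minus_notin_nonpos_Reals:
  fixes a :: complex
  assumes "norm a < 1"
  shows "1 - a \<notin> \<real>\<^sub>\<le>\<^sub>0"
  using assms complex_Re_le_cmod[of a] by (auto simp: complex_nonpos_Reals_iff)

lemma one_minus_neq_0:
  fixes a :: "'a::real_normed_algebra_1"
  assumes "norm a < 1"
  shows "1 - a \<noteq> 0"
  using assms by (metis eq_iff_diff_eq_0 norm_one less_irrefl)

lemma pos_if_nonzero_on_interval:
  fixes f :: "real \<Rightarrow> real"
  assumes cont: "continuous_on {a<..<b} f" and nz: "\<And>x. a < x \<Longrightarrow> x < b \<Longrightarrow> f x \<noteq> 0"
    and right: "eventually (\<lambda>x. 0 < f x) (at_right a)" and x: "a < x" "x < b"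
  shows "0 < f x"
proof (rule ccontr)
  assume "\<not> 0 < f x"
  obtain c where c: "a < c" "\<And>y. a < y \<Longrightarrow> y < c \<Longrightarrow> 0 < f y"
    using right unfolding eventually_at_right[OF x(1)] by blast
  define y where "y = (a + min c x) / 2"
  have y: "a < y" "y < c" "y < x" using c(1) x(1) by (auto simp: y_def min_def)
  have "\<exists>t. y \<le> t \<and> t \<le> x \<and> f t = 0"
  proof (rule IVT2')
    show "f x \<le> 0" using \<open>\<not> 0 < f x\<close> by simp
    show "0 \<le> f y" using c(2)[OF y(1,2)] by simp
    show "y \<le> x" using y(3) by simp
    show "continuous_on {y..x} f" by (rule continuous_on_subset[OF cont]) (use y(1) x(2) in auto)
  qed
  then obtain t where t: "y \<le> t" "t \<le> x" "f t = 0" by blast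
  then have "a < t" "t < b" using y(1) x(2) by linarith+
  with nz t(3) show False by blast
qed

lemma filterlim_of_real_at_right: "filterlim complex_of_real (at (of_real x)) (at_right x)"
proof (subst filterlim_at, intro conjI)
  show "\<forall>\<^sub>F r in at_right x. complex_of_real r \<in> UNIV \<and> complex_of_real r \<noteq> of_real x"
    using eventually_at_right_less[of x] by eventually_elim auto
  show "(complex_of_real \<longlongrightarrow> of_real x) (at_right x)"
    by (auto intro!: tendsto_eq_intros)
qed

lemma has_field_derivative_Re_pos_at_right:
  fixes F :: "complex \<Rightarrow> complex"
  assumes deriv: "(F has_field_derivative D) (at (of_real x))" and zero: "F (of_real x) = 0"
    and pos: "0 < Re D"
  shows "eventually (\<lambda>r. 0 < Re (F (of_real r))) (at_right x)"
proof -
  have "((\<lambda>w. (F w - F (of_real x)) / (w - of_real x)) \<longlongrightarrow> D) (at (of_real x))"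
    using deriv by (simp add: has_field_derivative_iff)
  then have "((\<lambda>r. Re ((F (of_real r) - F (of_real x)) / (of_real r - of_real x))) \<longlongrightarrow> Re D)
      (at_right x)"
    by (intro tendsto_Re filterlim_compose[OF _ filterlim_of_real_at_right, unfolded o_def])
  then have "eventually (\<lambda>r. 0 < Re ((F (of_real r) - F (of_real x)) / (of_real r - of_real x)))
      (at_right x)"
    using pos by (intro order_tendstoD(1))
  with eventually_at_right_less[of x] show ?thesis
    by eventually_elim (simp add: zero zero_less_divide_iff flip: of_real_diff)
qed

lemma Im_eq_0_if_eventually_at_right:
  fixes h :: "complex \<Rightarrow> complex"
  assumes "isCont h (of_real x)" and "eventually (\<lambda>r. Im (h (of_real r)) = 0) (at_right x)"
  shows "Im (h (of_real x)) = 0"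
proof -
  have "isCont complex_of_real x" by (intro continuous_intros)
  from isCont_o2[OF this assms(1)] have "((\<lambda>r. h (of_real r)) \<longlongrightarrow> h (of_real x)) (at_right x)"
    unfolding isCont_def by (rule tendsto_mono[OF at_le[OF subset_UNIV]])
  then have "((\<lambda>r. Im (h (of_real r))) \<longlongrightarrow> Im (h (of_real x))) (at_right x)"
    by (rule tendsto_Im)
  from tendsto_unique[OF _ this tendsto_eventually[OF assms(2)]] show ?thesis by simp
qed

lemma exp_eq_imp_diff_const_on_connected:
  fixes f g :: "'a::topological_space \<Rightarrow> complex"
  assumes U: "connected U" and cont: "continuous_on U f" "continuous_on U g"
    and exp_agree: "\<And>w. w \<in> U \<Longrightarrow> exp (f w) = exp (g w)"
  shows "\<exists>m::int. \<forall>w\<in>U. f w = g w + 2 * of_real pi * \<i> * of_int m"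
proof -
  define \<phi> where "\<phi> = (\<lambda>w. (f w - g w) / (2 * of_real pi * \<i>))"
  have \<phi>_int: "\<exists>m::int. \<phi> w = of_int m" if w: "w \<in> U" for w
  proof -
    obtain m :: int where "f w = g w + of_int (2 * m) * pi * \<i>"
      using exp_agree[OF w] by (auto simp: exp_eq)
    then have "\<phi> w = of_int m" by (simp add: \<phi>_def field_simps)
    then show ?thesis by blast
  qed
  have "continuous_on U \<phi>" unfolding \<phi>_def by (intro continuous_intros cont) auto
  then have "\<phi> constant_on U"
  proof (rule continuous_discrete_range_constant[OF U])
    fix x assume "x \<in> U"
    then obtain a :: int where a: "\<phi> x = of_int a" using \<phi>_int by blast
    show "\<exists>e>0. \<forall>y. y \<in> U \<and> \<phi> y \<noteq> \<phi> x \<longrightarrow> e \<le> norm (\<phi> y - \<phi> x)"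
    proof (intro exI[of _ 1] conjI allI impI)
      fix y assume y: "y \<in> U \<and> \<phi> y \<noteq> \<phi> x"
      then obtain b :: int where b: "\<phi> y = of_int b" using \<phi>_int by blast
      with a y have "1 \<le> \<bar>of_int (b - a) :: real\<bar>" by auto
      then show "1 \<le> norm (\<phi> y - \<phi> x)" using a b by (simp only: norm_of_int flip: of_int_diff)
    qed simp
  qed
  show ?thesis
  proof (cases "U = {}")
    case False
    then obtain w\<^sub>0 where "w\<^sub>0 \<in> U" by blast
    with \<phi>_int obtain m :: int where "\<phi> w\<^sub>0 = of_int m" by blast
    moreover from \<open>\<phi> constant_on U\<close> obtain c where "\<forall>w\<in>U. \<phi> w = c"
      unfolding constant_on_def by blast
    ultimately have "\<forall>w\<in>U. \<phi> w = of_int m" using \<open>w\<^sub>0 \<in> U\<close> by simp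
    then show ?thesis by (intro exI[of _ m]) (simp add: \<phi>_def field_simps)
  qed simp
qed

lemma zorder_diff_const: "zorder (\<lambda>w. w - a) z = (if a = z then 1 else 0)"
proof (cases "a = z")
  case True
  have "zorder (\<lambda>w. w - a) z = 1"
    by (rule zorder_eqI[where S = UNIV and g = "\<lambda>_. 1"]) (use True in auto)
  then show ?thesis using True by simp
next
  case False
  have "zorder (\<lambda>w. w - a) z = 0"
    by (rule zorder_eq_0I) (use False in \<open>auto intro!: analytic_intros\<close>)
  then show ?thesis using False by simp
qed

lemma eventually_prod_diff_const_nonzero:
  fixes a :: "'a \<Rightarrow> complex"
  assumes "finite J"
  shows "eventually (\<lambda>w. (\<Prod>j\<in>J. w - a j) \<noteq> 0) (at z)"
proof -
  have "eventually (\<lambda>w. \<forall>j\<in>J. w \<noteq> a j) (at z)"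
    using assms by (simp add: eventually_ball_finite eventually_neq_at_within)
  then show ?thesis by eventually_elim (use assms in auto)
qed

lemma zorder_prod_diff_const:
  fixes a :: "'a \<Rightarrow> complex"
  assumes "finite J"
  shows "zorder (\<lambda>w. \<Prod>j\<in>J. w - a j) z = int (card {j\<in>J. a j = z})"
proof -
  have "zorder (\<lambda>w. \<Prod>j\<in>J. w - a j) z = (\<Sum>j\<in>J. zorder (\<lambda>w. w - a j) z)"
    by (rule zorder_prod_analytic[where f = "\<lambda>j w. w - a j"])
      (auto intro!: analytic_intros eventually_prod_diff_const_nonzero assms)
  also have "\<dots> = int (card {j\<in>J. a j = z})"
    using assms by (simp add: zorder_diff_const sum.If_cases Int_def)
  finally show ?thesis .
qed

lemma remove_sings_divide_analytic_nonzero: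
  assumes f: "f analytic_on {z}" and g: "g analytic_on {z}"
    and ev_f: "eventually (\<lambda>w. f w \<noteq> 0) (at z)" and ev_g: "eventually (\<lambda>w. g w \<noteq> 0) (at z)"
    and same_order: "zorder f z = zorder g z"
  shows "remove_sings (\<lambda>w. f w / g w) analytic_on {z}" "remove_sings (\<lambda>w. f w / g w) z \<noteq> 0"
proof -
  let ?h = "\<lambda>w. f w / g w"
  have "?h meromorphic_on {z}"
    by (intro meromorphic_intros analytic_on_imp_meromorphic_on f g)
  then have iso: "isolated_singularity_at ?h z" and ness: "not_essential ?h z"
    by (auto simp: meromorphic_at_iff)
  have ev_h: "eventually (\<lambda>w. ?h w \<noteq> 0) (at z)"
    using ev_f ev_g by eventually_elim simp
  have order0: "zorder ?h z = 0"
    using f g ev_f ev_g same_order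
    by (subst zorder_divide) (auto intro: analytic_on_imp_meromorphic_on simp: eventually_frequently)
  then have "\<not> is_pole ?h z" using isolated_pole_imp_neg_zorder[OF iso] by auto
  then obtain c where c: "?h \<midarrow>z\<rightarrow> c" using ness unfolding not_essential_def by auto
  have "c \<noteq> 0"
  proof
    assume "c = 0"
    then have "isolated_zero ?h z" using c ev_h unfolding isolated_zero_def by auto
    then show False using zorder_isolated_zero_pos'[OF _ iso] order0 by auto
  qed
  then show "remove_sings ?h analytic_on {z}" "remove_sings ?h z \<noteq> 0"
    using remove_sings_analytic_at[OF iso c] remove_sings_eqI[OF c] by auto
qed

lemma contour_integral_circlepath_inverse:
  assumes r: "r > 0"
  shows "contour_integral (circlepath 0 r) h =
         contour_integral (circlepath 0 (1/r)) (\<lambda>u. h (1/u) / u^2)"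
proof -
  let ?\<gamma> = "circlepath (0::complex) (1/r)"
  have inv_circle: "(\<lambda>u. 1/u) \<circ> ?\<gamma> = reversepath (circlepath 0 r)"
  proof
    fix t :: real
    have e1: "exp (2 * of_real pi * \<i> * of_real (1 - t)) = exp (- (2 * of_real pi * \<i> * of_real t))"
      by (simp add: algebra_simps exp_diff exp_minus) (metis inverse_eq_divide)
    have e2: "1 / exp (2 * of_real pi * \<i> * of_real t) = exp (- (2 * of_real pi * \<i> * of_real t))"
      by (metis exp_minus inverse_eq_divide)
    have "((\<lambda>u. 1/u) \<circ> ?\<gamma>) t = 1 / (of_real (1/r) * exp (2 * of_real pi * \<i> * of_real t))"
      by (simp add: circlepath)
    also have "\<dots> = of_real r * (1 / exp (2 * of_real pi * \<i> * of_real t))"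
      using r by (simp add: field_simps)
    also have "\<dots> = of_real r * exp (2 * of_real pi * \<i> * of_real (1 - t))"
      by (simp only: e1 e2)
    also have "\<dots> = reversepath (circlepath 0 r) t"
      by (simp add: circlepath reversepath_def)
    finally show "((\<lambda>u. 1/u) \<circ> ?\<gamma>) t = reversepath (circlepath 0 r) t" .
  qed
  have avoids_0: "path_image ?\<gamma> \<subseteq> - {0}" using r by auto
  have "contour_integral ((\<lambda>u. 1/u) \<circ> ?\<gamma>) h =
        contour_integral ?\<gamma> (\<lambda>w. deriv (\<lambda>u. 1/u) w * h (1/w))"
    by (rule contour_integral_comp_analyticW[OF _ _ avoids_0]) (auto intro!: analytic_intros)
  also have "\<dots> = contour_integral ?\<gamma> (\<lambda>w. - (h (1/w) / w^2))"
  proof (rule contour_integral_cong)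
    fix w assume "w \<in> path_image ?\<gamma>"
    then have w: "w \<noteq> 0" using r by auto
    have "((\<lambda>u. 1/u) has_field_derivative (- 1 / w^2)) (at w)"
      using w by (auto intro!: derivative_eq_intros simp: field_simps power2_eq_square)
    then show "deriv (\<lambda>u. 1/u) w * h (1/w) = - (h (1/w) / w^2)"
      by (simp add: DERIV_imp_deriv)
  qed simp
  finally have "contour_integral (reversepath (circlepath 0 r)) h =
      - contour_integral ?\<gamma> (\<lambda>w. h (1/w) / w^2)"
    using inv_circle by (simp add: contour_integral_neg)
  then show ?thesis by (simp add: contour_integral_reversepath)
qed

text \<open>The exterior Cauchy formula, obtained from the interior one by the substitution \<open>z = 1/u\<close>.\<close>

lemma contour_integral_circlepath_exterior:
  assumes holK: "K holomorphic_on ball 0 1" and K0: "K 0 = 0" and r: "1 < r"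
    and Z: "Z \<noteq> 0" "norm Z \<noteq> r"
  shows "contour_integral (circlepath 0 r) (\<lambda>z. K (1/z) / (Z - z)) =
         (if r < norm Z then 2 * of_real pi * \<i> * K (1/Z) else 0)"
proof -
  let ?\<gamma> = "circlepath (0::complex) (1/r)"
  let ?v = "if r < norm Z then 2 * of_real pi * \<i> * K (1/Z) else 0"
  have r0: "0 < 1/r" "1/r < 1" using r by auto
  have holKc: "K holomorphic_on cball 0 (1/r)"
    by (rule holomorphic_on_subset[OF holK])
      (use r0 in \<open>auto simp: subset_iff dist_norm intro: le_less_trans\<close>)
  have at_0: "((\<lambda>u. K u / (u - 0)) has_contour_integral 0) ?\<gamma>"
    using Cauchy_integral_circlepath_simple[OF holKc, of 0] r0 K0 by simp
  have at_inv_Z: "((\<lambda>u. K u / (u - 1/Z)) has_contour_integral ?v) ?\<gamma>"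
  proof (cases "r < norm Z")
    case True
    then have "norm (1/Z - 0) < 1/r" using r Z by (simp add: norm_divide field_simps)
    from Cauchy_integral_circlepath_simple[OF holKc this] True show ?thesis by simp
  next
    case False
    then have nZ: "norm Z < r" using Z by auto
    define e where "e = min 1 (1 / norm Z)"
    have e: "1/r < e" using nZ r Z by (auto simp: e_def field_simps)
    have "((\<lambda>u. K u / (u - 1/Z)) has_contour_integral 0) ?\<gamma>"
    proof (rule Cauchy_theorem_disc_simple[of _ 0 e])
      show "(\<lambda>u. K u / (u - 1/Z)) holomorphic_on ball 0 e"
      proof (intro holomorphic_intros)
        show "K holomorphic_on ball 0 e" by (rule holomorphic_on_subset[OF holK]) (auto simp: e_def)
        fix u assume "u \<in> ball (0::complex) e"
        then have "norm u < 1 / norm Z" by (auto simp: e_def)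
        then show "u - 1/Z \<noteq> 0" by (auto simp: norm_divide)
      qed
    qed (use e r0 in auto)
    then show ?thesis using False by simp
  qed
  have "((\<lambda>u. K (1 / (1/u)) / (Z - 1/u) / u^2) has_contour_integral ?v) ?\<gamma>"
  proof (rule has_contour_integral_eq[OF has_contour_integral_diff[OF at_inv_Z at_0, simplified]])
    fix u assume "u \<in> path_image ?\<gamma>"
    then have u: "norm u = 1/r" using r0 by auto
    then have u0: "u \<noteq> 0" using r0 by auto
    have "Z * u \<noteq> 1"
    proof
      assume "Z * u = 1"
      then have "norm Z * norm u = 1" by (metis norm_mult norm_one)
      then show False using u Z r by (auto simp: field_simps)
    qed
    then show "K u / (u - 1/Z) - K u / u = K (1 / (1/u)) / (Z - 1/u) / u^2"
      using u0 Z by (simp add: field_simps power2_eq_square)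
  qed
  then show ?thesis
    using contour_integral_circlepath_inverse[of r "\<lambda>z. K (1/z) / (Z - z)"] r
    by (simp add: contour_integral_unique)
qed

lemma contour_integral_circlepath_interior:
  assumes holM: "M holomorphic_on ball 0 \<rho>" and r: "0 < r" "r < \<rho>" and Z: "norm Z \<noteq> r"
  shows "contour_integral (circlepath 0 r) (\<lambda>z. M z / (Z - z)) =
         (if norm Z < r then - (2 * of_real pi * \<i> * M Z) else 0)"
proof (cases "norm Z < r")
  case True
  have "M holomorphic_on cball 0 r"
    by (rule holomorphic_on_subset[OF holM])
      (use r in \<open>auto simp: subset_iff dist_norm intro: le_less_trans\<close>)
  from Cauchy_integral_circlepath_simple[OF this, of Z] True
  have "contour_integral (circlepath 0 r) (\<lambda>u. M u / (u - Z)) = 2 * of_real pi * \<i> * M Z"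
    by (simp add: contour_integral_unique)
  moreover have "(\<lambda>z. M z / (Z - z)) = (\<lambda>z. - (M z / (z - Z)))"
    by (simp add: fun_eq_iff minus_divide_right)
  ultimately show ?thesis using True by (simp add: contour_integral_neg)
next
  case False
  then have Zr: "r < norm Z" using Z by auto
  define e where "e = min \<rho> (norm Z)"
  have "((\<lambda>z. M z / (Z - z)) has_contour_integral 0) (circlepath 0 r)"
  proof (rule Cauchy_theorem_disc_simple[of _ 0 e])
    show "(\<lambda>z. M z / (Z - z)) holomorphic_on ball 0 e"
    proof (intro holomorphic_intros holomorphic_on_subset[OF holM])
      show "ball 0 e \<subseteq> ball 0 \<rho>" by (auto simp: e_def)
      fix z assume "z \<in> ball (0::complex) e"
      then have "norm z < norm Z" by (auto simp: e_def)
      then show "Z - z \<noteq> 0" by auto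
    qed
  qed (use Zr r in \<open>auto simp: e_def\<close>)
  then show ?thesis using False by (simp add: contour_integral_unique)
qed

section \<open>Probability generating functions\<close>

lemma pgf_holomorphic: "pgf X holomorphic_on eball 0 (conv_radius (\<lambda>k. complex_of_real (pmf X k)))"
proof -
  have "pgf X = eval_fps (Abs_fps (\<lambda>k. complex_of_real (pmf X k)))"
    by (simp add: pgf_def eval_fps_def fun_eq_iff)
  then show ?thesis by (simp add: holomorphic_on_eval_fps fps_conv_radius_def)
qed

lemma pgf_of_real:
  assumes "ereal \<bar>r\<bar> < conv_radius (\<lambda>k. complex_of_real (pmf X k))"
  shows "summable (\<lambda>k. pmf X k * r ^ k)" "pgf X (of_real r) = of_real (\<Sum>k. pmf X k * r ^ k)"
proof -
  have "(\<lambda>k. complex_of_real (pmf X k) * of_real r ^ k) sums pgf X (of_real r)"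
    unfolding pgf_def by (rule summable_sums[OF summable_in_conv_radius]) (use assms in simp)
  then have sums: "(\<lambda>k. complex_of_real (pmf X k * r ^ k)) sums pgf X (of_real r)"
    by simp
  have "summable (\<lambda>k. complex_of_real (pmf X k * r ^ k))"
    using sums_summable[OF sums] .
  then show summable: "summable (\<lambda>k. pmf X k * r ^ k)"
    by (simp only: summable_complex_of_real)
  show "pgf X (of_real r) = of_real (\<Sum>k. pmf X k * r ^ k)"
    by (rule sums_unique2[OF sums sums_of_real[OF summable_sums[OF summable]]])
qed

lemma pgf_of_nonneg_real:
  assumes "0 \<le> r" "ereal r < conv_radius (\<lambda>k. complex_of_real (pmf X k))"
  shows "pgf X (of_real r) = of_real (norm (pgf X (of_real r)))"
proof -
  have "0 \<le> (\<Sum>k. pmf X k * r ^ k)"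
    using pgf_of_real(1)[of r X] assms by (intro suminf_nonneg) auto
  then show ?thesis using pgf_of_real(2)[of r X] assms by simp
qed

lemma norm_pgf_le_pgf_norm:
  assumes "ereal (norm z) < conv_radius (\<lambda>k. complex_of_real (pmf X k))"
  shows "norm (pgf X z) \<le> norm (pgf X (of_real (norm z)))"
proof -
  have norms: "(\<lambda>k. norm (complex_of_real (pmf X k) * z ^ k)) = (\<lambda>k. pmf X k * norm z ^ k)"
    by (simp add: norm_mult norm_power)
  have "norm (pgf X z) \<le> (\<Sum>k. pmf X k * norm z ^ k)"
    unfolding pgf_def norms[symmetric]
    by (rule summable_norm) (use pgf_of_real(1)[of "norm z" X] assms in \<open>simp add: norms\<close>)
  also have "\<dots> = norm (pgf X (of_real (norm z)))"
    using pgf_of_nonneg_real[of "norm z" X] pgf_of_real(2)[of "norm z" X] assms by simp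
  finally show ?thesis .
qed

lemma pgf_1:
  assumes "1 < conv_radius (\<lambda>k. complex_of_real (pmf X k))"
  shows "pgf X 1 = 1"
proof -
  have "(\<lambda>k. pmf X k) sums 1"
    using sums_infsetsum_nat'[OF pmf_abs_summable[of X UNIV]] infsetsum_pmf_eq_1[of X UNIV] by simp
  then show ?thesis
    using pgf_of_real(2)[of 1 X] assms by (simp add: one_ereal_def sums_iff)
qed

section \<open>The kernel \<open>z\<^sup>s - X(z)\<^sup>n\<close>\<close>

text \<open>The radius \<open>\<rho>\<close> plays the role of \<open>|Z\<^sub>0|\<close>.\<close>

locale pgf_kernel =
  fixes X :: "nat pmf" and n s :: nat and \<mu> \<rho> :: real and zs :: "nat \<Rightarrow> complex"
  assumes radius: "ereal \<rho> < conv_radius (\<lambda>k. complex_of_real (pmf X k))"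
    and one_less_radius: "1 < \<rho>"
    and mean: "(pgf X has_field_derivative of_real \<mu>) (at 1)"
    and aperiodic: "\<And>z. norm z = 1 \<Longrightarrow> z \<noteq> 1 \<Longrightarrow> norm (pgf X z) < norm (pgf X 1)"
    and n_pos: "0 < n" and s_pos: "0 < s"
    and load: "real n * \<mu> < real s"
    and zero_free_annulus: "\<And>z. 1 < norm z \<Longrightarrow> norm z < \<rho> \<Longrightarrow> z ^ s - pgf X z ^ n \<noteq> 0"
    and zs_in: "\<And>j. j \<in> {1..<s} \<Longrightarrow> norm (zs j) < 1"
    and zs_zeros: "\<And>w. norm w < 1 \<Longrightarrow>
          int (card {j \<in> {1..<s}. zs j = w}) = zorder (\<lambda>z. z ^ s - pgf X z ^ n) w"
begin

definition kernel :: "complex \<Rightarrow> complex" where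
  "kernel z = z ^ s - pgf X z ^ n"

definition root_poly :: "complex \<Rightarrow> complex" where
  "root_poly w = (w - 1) * (\<Prod>j\<in>{1..<s}. w - zs j)"

definition kernel_quotient :: "complex \<Rightarrow> complex" where
  "kernel_quotient = remove_sings (\<lambda>w. kernel w / root_poly w)"

definition log_kernel :: "complex \<Rightarrow> complex" where
  "log_kernel w = Ln (1 - pgf X w ^ n / w ^ s)"

definition log_roots :: "complex \<Rightarrow> complex" where
  "log_roots u = Ln (1 - u) + (\<Sum>j\<in>{1..<s}. Ln (1 - zs j * u))"

lemma less_radius: "x \<le> \<rho> \<Longrightarrow> ereal x < conv_radius (\<lambda>k. complex_of_real (pmf X k))"
  using radius by (meson ereal_less_eq(3) le_less_trans)

lemma zs_neq_1: "j \<in> {1..<s} \<Longrightarrow> zs j \<noteq> 1"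
  using zs_in by fastforce

lemma kernel_holomorphic: "kernel holomorphic_on ball 0 \<rho>"
proof -
  have "ball 0 \<rho> \<subseteq> eball 0 (conv_radius (\<lambda>k. complex_of_real (pmf X k)))"
    using less_radius by (auto simp: dist_norm)
  then show ?thesis unfolding kernel_def[abs_def]
    by (intro holomorphic_intros holomorphic_on_subset[OF pgf_holomorphic])
qed

lemma kernel_analytic: "norm w < \<rho> \<Longrightarrow> kernel analytic_on {w}"
  using kernel_holomorphic analytic_at[of kernel w] by auto

lemma pgf_at_1: "pgf X 1 = 1"
  using pgf_1 less_radius[of 1] one_less_radius by (simp add: one_ereal_def)

lemma kernel_at_1: "kernel 1 = 0"
  by (simp add: kernel_def pgf_at_1)

lemma kernel_deriv_at_1: "(kernel has_field_derivative of_real (real s - real n * \<mu>)) (at 1)"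
proof -
  have "(kernel has_field_derivative (of_nat s * 1 ^ (s - 1) - of_nat n * pgf X 1 ^ (n - 1) * of_real \<mu>))
      (at 1)"
    unfolding kernel_def[abs_def] by (auto intro!: derivative_eq_intros mean)
  then show ?thesis by (simp add: pgf_at_1)
qed

lemma kernel_of_real:
  assumes "0 \<le> r" "r < \<rho>"
  shows "kernel (of_real r) = of_real (r ^ s - norm (pgf X (of_real r)) ^ n)"
  using pgf_of_nonneg_real[of r X] less_radius[of r] assms
  by (simp add: kernel_def)

lemma kernel_nonzero:
  assumes "1 \<le> norm w" "norm w < \<rho>" "w \<noteq> 1"
  shows "kernel w \<noteq> 0"
proof (cases "norm w = 1")
  case True
  have "norm (pgf X w) ^ n < 1 ^ n"
    by (rule power_strict_mono) (use aperiodic[OF True assms(3)] n_pos in \<open>auto simp: pgf_at_1\<close>)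
  then have "norm (pgf X w ^ n) \<noteq> norm (w ^ s)"
    using True by (simp add: norm_power)
  then show ?thesis by (auto simp: kernel_def)
next
  case False
  then show ?thesis using zero_free_annulus[of w] assms by (simp add: kernel_def)
qed

text \<open>On the real axis the kernel is real; it vanishes at \<open>1\<close> with positive slope \<open>s - n\<mu>\<close> and has
  no zero in \<open>(1, \<rho>)\<close>, so it stays positive there.\<close>

lemma norm_pgf_power_less_on_real_axis:
  assumes "1 < r" "r < \<rho>"
  shows "norm (pgf X (of_real r)) ^ n < r ^ s"
proof -
  let ?h = "\<lambda>t. Re (kernel (of_real t))"
  have "continuous_on {1<..<\<rho>} (\<lambda>t. kernel (of_real t))"
    by (rule continuous_on_compose2[OF holomorphic_on_imp_continuous_on[OF kernel_holomorphic]
          continuous_on_of_real]) auto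
  then have "continuous_on {1<..<\<rho>} ?h" by (rule continuous_on_Re)
  moreover have "?h t \<noteq> 0" if "1 < t" "t < \<rho>" for t
  proof -
    have "kernel (of_real t) = of_real (Re (kernel (of_real t)))"
      using kernel_of_real[of t] that by simp
    moreover have "kernel (of_real t) \<noteq> 0" using kernel_nonzero that by simp
    ultimately show ?thesis by (metis of_real_0)
  qed
  moreover have "eventually (\<lambda>t. 0 < ?h t) (at_right 1)"
    using has_field_derivative_Re_pos_at_right[of kernel _ 1] kernel_deriv_at_1 kernel_at_1 load
    by simp
  ultimately have "0 < ?h r" using assms by (rule pos_if_nonzero_on_interval)
  then show ?thesis using kernel_of_real[of r] assms by simp
qed

lemma norm_pgf_power_div_less_1:
  assumes "1 < norm w" "norm w < \<rho>"
  shows "norm (pgf X w ^ n / w ^ s) < 1"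
proof -
  have "norm (pgf X w) ^ n \<le> norm (pgf X (of_real (norm w))) ^ n"
    using norm_pgf_le_pgf_norm[of w X] less_radius[of "norm w"] assms by (simp add: power_mono)
  also have "\<dots> < norm w ^ s" using norm_pgf_power_less_on_real_axis assms by simp
  moreover have "0 < norm w ^ s" using assms by (auto intro!: zero_less_power)
  ultimately show ?thesis by (simp add: norm_divide norm_power divide_less_eq_1_pos)
qed

lemma kernel_eventually_nonzero:
  assumes "norm w < \<rho>"
  shows "eventually (\<lambda>v. kernel v \<noteq> 0) (at w)"
proof -
  have "kernel (-1) \<noteq> 0" using kernel_nonzero one_less_radius by simp
  then have "\<forall>\<^sub>F v in at w. kernel v \<noteq> 0 \<and> v \<in> ball 0 \<rho>"
    using assms one_less_radius by (intro non_zero_neighbour_alt[OF kernel_holomorphic]) auto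
  then show ?thesis by (auto elim: eventually_mono)
qed

lemma root_poly_eventually_nonzero: "eventually (\<lambda>v. root_poly v \<noteq> 0) (at w)"
proof -
  have "eventually (\<lambda>v. (\<Prod>j\<in>{1..<s}. v - zs j) \<noteq> 0) (at w)"
    by (rule eventually_prod_diff_const_nonzero) simp
  with eventually_neq_at_within[of 1 w UNIV] show ?thesis
    by eventually_elim (simp add: root_poly_def)
qed

lemma root_poly_nonzero:
  assumes "1 \<le> norm w" "w \<noteq> 1"
  shows "root_poly w \<noteq> 0"
proof -
  have "w - zs j \<noteq> 0" if "j \<in> {1..<s}" for j
    using zs_in[OF that] assms(1) by auto
  then show ?thesis using assms(2) by (simp add: root_poly_def)
qed

lemma zorder_root_poly: "zorder root_poly w = (if w = 1 then 1 else 0) + int (card {j\<in>{1..<s}. zs j = w})"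
proof -
  have "zorder root_poly w = zorder (\<lambda>v. v - 1) w + zorder (\<lambda>v. \<Prod>j\<in>{1..<s}. v - zs j) w"
    unfolding root_poly_def[abs_def]
    by (rule zorder_times_analytic)
      (use root_poly_eventually_nonzero in \<open>auto intro!: analytic_intros simp: root_poly_def\<close>)
  then show ?thesis by (auto simp: zorder_diff_const zorder_prod_diff_const)
qed

lemma zorder_kernel:
  assumes "norm w < \<rho>"
  shows "zorder kernel w = zorder root_poly w"
proof -
  consider "norm w < 1" | "w = 1" | "1 \<le> norm w" "w \<noteq> 1" by fastforce
  then show ?thesis
  proof cases
    case 1
    then show ?thesis using zs_zeros[OF 1] by (auto simp: zorder_root_poly kernel_def[abs_def])
  next
    case 2
    have "zorder kernel 1 = 1"
    proof (rule zorder_zero_eqI')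
      show "kernel analytic_on {1}" using kernel_analytic one_less_radius by simp
      have "complex_of_real (real s - real n * \<mu>) \<noteq> 0"
        using load by (metis of_real_eq_0_iff diff_gt_0_iff_gt less_irrefl)
      then show "(deriv ^^ nat 1) kernel 1 \<noteq> 0"
        using DERIV_imp_deriv[OF kernel_deriv_at_1] by simp
    qed (use kernel_at_1 in auto)
    moreover have "{j\<in>{1..<s}. zs j = 1} = {}" using zs_neq_1 by blast
    ultimately show ?thesis using 2 by (simp add: zorder_root_poly)
  next
    case 3
    then have "{j\<in>{1..<s}. zs j = w} = {}" using zs_in by force
    moreover have "zorder kernel w = 0"
      using 3 assms by (intro zorder_eq_0I kernel_analytic kernel_nonzero) auto
    ultimately show ?thesis using 3 by (simp add: zorder_root_poly)
  qed
qed

lemma kernel_quotient_analytic_nonzero: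
  assumes "norm w < \<rho>"
  shows "kernel_quotient analytic_on {w}" "kernel_quotient w \<noteq> 0"
proof -
  have "root_poly analytic_on {w}"
    unfolding root_poly_def[abs_def] by (intro analytic_intros)
  note quotient = remove_sings_divide_analytic_nonzero[OF kernel_analytic[OF assms] this
      kernel_eventually_nonzero[OF assms] root_poly_eventually_nonzero zorder_kernel[OF assms]]
  show "kernel_quotient analytic_on {w}" unfolding kernel_quotient_def by (rule quotient(1))
  show "kernel_quotient w \<noteq> 0" unfolding kernel_quotient_def by (rule quotient(2))
qed

lemma kernel_quotient_holomorphic: "kernel_quotient holomorphic_on ball 0 \<rho>"
proof -
  have "kernel_quotient analytic_on ball 0 \<rho>"
    by (subst analytic_on_analytic_at) (simp add: kernel_quotient_analytic_nonzero(1))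
  then show ?thesis by (rule analytic_imp_holomorphic)
qed

lemma kernel_quotient_eq:
  assumes "norm w < \<rho>" "root_poly w \<noteq> 0"
  shows "kernel_quotient w = kernel w / root_poly w"
  unfolding kernel_quotient_def
  by (rule remove_sings_at_analytic)
    (use assms in \<open>auto intro!: analytic_intros kernel_analytic simp: root_poly_def[abs_def]\<close>)

lemma kernel_quotient_at_1:
  "kernel_quotient 1 = of_real (real s - real n * \<mu>) / (\<Prod>j\<in>{1..<s}. 1 - zs j)"
proof -
  have "((\<lambda>w. (kernel w - kernel 1) / (w - 1)) \<longlongrightarrow> of_real (real s - real n * \<mu>)) (at 1)"
    using kernel_deriv_at_1 by (simp add: has_field_derivative_iff)
  moreover have "((\<lambda>w. \<Prod>j\<in>{1..<s}. w - zs j) \<longlongrightarrow> (\<Prod>j\<in>{1..<s}. 1 - zs j)) (at 1)"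
    by (intro tendsto_eq_intros) auto
  moreover have "(\<Prod>j\<in>{1..<s}. 1 - zs j) \<noteq> 0"
    using zs_neq_1 by simp
  ultimately have "((\<lambda>w. (kernel w - kernel 1) / (w - 1) / (\<Prod>j\<in>{1..<s}. w - zs j)) \<longlongrightarrow>
      of_real (real s - real n * \<mu>) / (\<Prod>j\<in>{1..<s}. 1 - zs j)) (at 1)"
    by (rule tendsto_divide)
  moreover have "(\<lambda>w. (kernel w - kernel 1) / (w - 1) / (\<Prod>j\<in>{1..<s}. w - zs j)) =
      (\<lambda>w. kernel w / root_poly w)"
    by (simp add: fun_eq_iff kernel_at_1 root_poly_def)
  ultimately show ?thesis
    unfolding kernel_quotient_def by (intro remove_sings_eqI) simp
qed

lemma norm_zs_mult_less_1:
  assumes "j \<in> {1..<s}" "norm u < 1"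
  shows "norm (zs j * u) < 1"
proof -
  have "norm (zs j) * norm u \<le> 1 * norm u"
    using zs_in[OF assms(1)] by (intro mult_right_mono) auto
  then show ?thesis using assms(2) by (simp add: norm_mult)
qed

lemma log_roots_0: "log_roots 0 = 0"
  by (simp add: log_roots_def)

lemma log_roots_holomorphic: "log_roots holomorphic_on ball 0 1"
  unfolding log_roots_def[abs_def]
  by (intro holomorphic_intros) (auto intro!: one_minus_notin_nonpos_Reals norm_zs_mult_less_1)

lemma exp_log_roots_inverse:
  assumes "1 < norm w"
  shows "exp (log_roots (1 / w)) = root_poly w / w ^ s"
proof -
  have w0: "w \<noteq> 0" using assms by auto
  have inv: "norm (1 / w) < 1" using assms by (simp add: norm_divide divide_less_eq_1)
  have "exp (Ln (1 - zs j / w)) = (w - zs j) / w" if "j \<in> {1..<s}" for j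
  proof -
    have "1 - zs j * (1 / w) \<noteq> 0" by (rule one_minus_neq_0[OF norm_zs_mult_less_1[OF that inv]])
    then show ?thesis using w0 by (simp add: field_simps)
  qed
  moreover have "exp (Ln (1 - 1 / w)) = (w - 1) / w"
    using one_minus_neq_0[OF inv] w0 by (simp add: field_simps)
  ultimately have "exp (log_roots (1 / w)) = (w - 1) / w * (\<Prod>j\<in>{1..<s}. (w - zs j) / w)"
    by (simp add: log_roots_def exp_add exp_sum)
  also have "\<dots> = root_poly w / (w * w ^ (s - 1))"
    by (simp add: prod_dividef root_poly_def)
  also have "w * w ^ (s - 1) = w ^ s" using s_pos by (cases s) auto
  finally show ?thesis .
qed

lemma log_kernel_holomorphic: "log_kernel holomorphic_on {w. 1 < norm w \<and> norm w < \<rho>}"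
proof -
  have "{w. 1 < norm w \<and> norm w < \<rho>} \<subseteq> eball 0 (conv_radius (\<lambda>k. complex_of_real (pmf X k)))"
    using less_radius by (auto simp: dist_norm)
  then show ?thesis unfolding log_kernel_def[abs_def]
    by (intro holomorphic_intros holomorphic_on_subset[OF pgf_holomorphic])
      (auto intro!: one_minus_notin_nonpos_Reals norm_pgf_power_div_less_1)
qed

lemma exp_log_kernel:
  assumes "1 < norm w" "norm w < \<rho>"
  shows "exp (log_kernel w) = kernel w / w ^ s"
proof -
  have "1 - pgf X w ^ n / w ^ s \<noteq> 0"
    using norm_pgf_power_div_less_1[OF assms] by (rule one_minus_neq_0)
  moreover have "w \<noteq> 0" using assms by auto
  ultimately show ?thesis by (simp add: log_kernel_def kernel_def diff_divide_distrib)
qed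

lemma exp_log_kernel_eq:
  assumes "1 < norm w" "norm w < \<rho>"
  shows "exp (log_kernel w) = exp (log_roots (1 / w)) * kernel_quotient w"
proof -
  have "root_poly w \<noteq> 0" using assms by (intro root_poly_nonzero) auto
  moreover have "w \<noteq> 0" using assms by auto
  ultimately show ?thesis
    using assms by (simp add: exp_log_kernel exp_log_roots_inverse kernel_quotient_eq)
qed

lemma log_kernel_decomposition:
  obtains M where "M holomorphic_on ball 0 \<rho>"
    "\<And>w. norm w < \<rho> \<Longrightarrow> exp (M w) = kernel_quotient w"
    "\<And>w. 1 < norm w \<Longrightarrow> norm w < \<rho> \<Longrightarrow> log_kernel w = log_roots (1 / w) + M w"
proof -
  obtain G where G: "G holomorphic_on ball 0 \<rho>" "\<And>w. w \<in> ball 0 \<rho> \<Longrightarrow> kernel_quotient w = exp (G w)"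
    using kernel_quotient_analytic_nonzero(2)
    by (rule contractible_imp_holomorphic_log[OF kernel_quotient_holomorphic
          convex_imp_contractible[OF convex_ball]]) auto
  define U where "U = {w::complex. 1 < norm w \<and> norm w < \<rho>}"
  have connected: "connected U"
    using connected_annulus(1)[of 1 "0::complex" \<rho>] by (simp add: U_def)
  have continuous: "continuous_on U log_kernel"
    unfolding U_def by (rule holomorphic_on_imp_continuous_on[OF log_kernel_holomorphic])
  have holomorphic: "(\<lambda>w. log_roots (1 / w) + G w) holomorphic_on U"
    unfolding U_def
    by (intro holomorphic_intros holomorphic_on_compose_gen[OF _ log_roots_holomorphic, unfolded o_def]
          holomorphic_on_subset[OF G(1)]) (auto simp: norm_divide divide_less_eq_1)
  have exp_agree: "exp (log_kernel w) = exp (log_roots (1 / w) + G w)" if "w \<in> U" for w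
    using that by (simp add: U_def exp_add exp_log_kernel_eq G(2))
  obtain m :: int
    where m: "\<And>w. w \<in> U \<Longrightarrow> log_kernel w = log_roots (1 / w) + G w + 2 * of_real pi * \<i> * of_int m"
    using exp_eq_imp_diff_const_on_connected[OF connected continuous
        holomorphic_on_imp_continuous_on[OF holomorphic] exp_agree] by blast
  show ?thesis
  proof (rule that[of "\<lambda>w. G w + 2 * of_real pi * \<i> * of_int m"])
    show "(\<lambda>w. G w + 2 * of_real pi * \<i> * of_int m) holomorphic_on ball 0 \<rho>"
      by (intro holomorphic_intros G(1))
    have "exp (2 * of_real pi * \<i> * of_int m) = 1"
      using exp_2pi_1_int[of m] by (simp add: mult_ac)
    then show "exp (G w + 2 * of_real pi * \<i> * of_int m) = kernel_quotient w" if "norm w < \<rho>" for w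
      using G(2)[of w] that by (simp add: exp_add)
    show "log_kernel w = log_roots (1 / w) + (G w + 2 * of_real pi * \<i> * of_int m)"
      if "1 < norm w" "norm w < \<rho>" for w
      using m[of w] that by (simp add: U_def add.assoc)
  qed
qed

context
  fixes M :: "complex \<Rightarrow> complex"
  assumes M_holomorphic: "M holomorphic_on ball 0 \<rho>"
    and exp_M: "\<And>w. norm w < \<rho> \<Longrightarrow> exp (M w) = kernel_quotient w"
    and log_kernel_eq: "\<And>w. 1 < norm w \<Longrightarrow> norm w < \<rho> \<Longrightarrow> log_kernel w = log_roots (1 / w) + M w"
begin

lemma Cauchy_integral_log_kernel:
  assumes r: "1 < r" "r < \<rho>" and Z: "Z \<noteq> 0" "norm Z \<noteq> r"
  shows "contour_integral (circlepath 0 r) (\<lambda>z. log_kernel z / (Z - z)) / (2 * of_real pi * \<i>) =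
         (if r < norm Z then log_roots (1 / Z) else - M Z)"
proof -
  have on_circle: "z \<in> path_image (circlepath 0 r) \<Longrightarrow> 1 < norm z \<and> norm z < \<rho> \<and> Z - z \<noteq> 0" for z
    using r Z by auto
  have integrable: "(\<lambda>z. f z / (Z - z)) contour_integrable_on circlepath 0 r"
    if "f holomorphic_on path_image (circlepath 0 r)" for f
    by (intro contour_integrable_continuous_circlepath continuous_intros
        holomorphic_on_imp_continuous_on that) (use on_circle in blast)
  have "(\<lambda>z. log_roots (1 / z)) holomorphic_on path_image (circlepath 0 r)"
    by (intro holomorphic_on_compose_gen[OF _ log_roots_holomorphic, unfolded o_def]
        holomorphic_intros) (use on_circle in \<open>auto simp: norm_divide divide_less_eq_1\<close>)
  moreover have "M holomorphic_on path_image (circlepath 0 r)"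
    by (rule holomorphic_on_subset[OF M_holomorphic]) (use on_circle in auto)
  moreover have "contour_integral (circlepath 0 r) (\<lambda>z. log_kernel z / (Z - z)) =
      contour_integral (circlepath 0 r) (\<lambda>z. log_roots (1 / z) / (Z - z) + M z / (Z - z))"
    by (rule contour_integral_cong) (use on_circle log_kernel_eq in \<open>auto simp: add_divide_distrib\<close>)
  ultimately have "contour_integral (circlepath 0 r) (\<lambda>z. log_kernel z / (Z - z)) =
      contour_integral (circlepath 0 r) (\<lambda>z. log_roots (1 / z) / (Z - z)) +
      contour_integral (circlepath 0 r) (\<lambda>z. M z / (Z - z))"
    by (simp add: contour_integral_add integrable)
  then show ?thesis
    using contour_integral_circlepath_exterior[OF log_roots_holomorphic log_roots_0 r(1) Z]
      contour_integral_circlepath_interior[OF M_holomorphic _ r(2) Z(2)] r Z(2)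
    by (cases "r < norm Z") auto
qed

lemma log_kernel_decomposition_at_1:
  "M 1 + (\<Sum>j\<in>{1..<s}. Ln (1 - zs j)) = of_real (ln (real s - real n * \<mu>))"
proof -
  define h where "h w = M w + (\<Sum>j\<in>{1..<s}. Ln (1 - zs j / w))" for w
  have exp_h: "exp (h 1) = of_real (real s - real n * \<mu>)"
  proof -
    have "exp (\<Sum>j\<in>{1..<s}. Ln (1 - zs j)) = (\<Prod>j\<in>{1..<s}. 1 - zs j)"
      using zs_neq_1 by (simp add: exp_sum)
    moreover have "(\<Prod>j\<in>{1..<s}. 1 - zs j) \<noteq> 0"
      using zs_neq_1 by simp
    ultimately show ?thesis
      using exp_M[of 1] one_less_radius by (simp add: h_def exp_add kernel_quotient_at_1)
  qed
  moreover have "Im (h 1) = 0"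
  proof -
    have "(1::complex) \<in> ball 0 \<rho>" using one_less_radius by simp
    then have "isCont M 1"
      using holomorphic_on_imp_continuous_on[OF M_holomorphic]
      by (simp add: continuous_on_eq_continuous_at)
    then have "isCont h 1"
      unfolding h_def using zs_in
      by (intro continuous_intros isCont_Ln') (auto intro!: one_minus_notin_nonpos_Reals)
    moreover have "eventually (\<lambda>r. Im (h (of_real r)) = 0) (at_right 1)"
      using eventually_at_right_real[OF one_less_radius]
    proof eventually_elim
      case (elim r)
      define p where "p = norm (pgf X (of_real r))"
      have "0 < 1 - p ^ n / r ^ s"
        using norm_pgf_power_less_on_real_axis[of r] elim by (simp add: p_def)
      moreover have "pgf X (of_real r) = of_real p"
        using pgf_of_nonneg_real[of r X] less_radius[of r] elim by (simp add: p_def)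
      ultimately have "log_kernel (of_real r) = of_real (ln (1 - p ^ n / r ^ s))"
        by (simp add: log_kernel_def flip: Ln_of_real)
      moreover have "Im (Ln (1 - 1 / complex_of_real r)) = 0"
        using elim Ln_of_real[of "1 - 1 / r"] by (simp add: field_simps)
      moreover have "h (of_real r) = log_kernel (of_real r) - Ln (1 - 1 / complex_of_real r)"
        using log_kernel_eq[of "of_real r"] elim by (simp add: h_def log_roots_def)
      ultimately show ?case by simp
    qed
    ultimately show ?thesis using Im_eq_0_if_eventually_at_right[where h = h and x = 1] by simp
  qed
  then have h_real: "h 1 = of_real (Re (h 1))" by (simp add: complex_eq_iff)
  with exp_h have "exp (Re (h 1)) = real s - real n * \<mu>"
    by (metis exp_of_real of_real_eq_iff)
  then have "Re (h 1) = ln (real s - real n * \<mu>)" by (metis ln_exp)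
  then have "h 1 = of_real (ln (real s - real n * \<mu>))" by (subst h_real) simp
  then show ?thesis by (simp add: h_def)
qed

end

end

theorem lemma3p4:
  fixes X :: "nat pmf" and R :: ereal and \<mu> \<gamma> \<epsilon> :: real and n s :: nat
    and zs :: "nat \<Rightarrow> complex" and Z0 :: complex
  assumes R_def: "R = conv_radius (\<lambda>k. complex_of_real (pmf X k))"
    and R_gt1: "R > 1"
    and mean: "(pgf X has_field_derivative complex_of_real \<mu>) (at 1)"
    and mu_pos: "\<mu> > 0"
    and aperiodic: "\<And>r1 z. 0 < r1 \<Longrightarrow> ereal r1 < R \<Longrightarrow> norm z = r1 \<Longrightarrow>
                       z \<noteq> complex_of_real r1 \<Longrightarrow>
                       norm (pgf X z) < norm (pgf X (complex_of_real r1))"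
    and n_pos: "0 < n" and s_pos: "0 < s"
    and load: "real n * \<mu> < real s"
    and degree: "\<exists>k. pmf X k > 0 \<and> real s / real n < real k"
    and gamma_def: "\<gamma> = (real s - real n * \<mu>) / sqrt (real s)"
    and zs_in: "\<And>j. j \<in> {1..<s} \<Longrightarrow> norm (zs j) < 1"
    and zs_zeros: "\<And>w. norm w < 1 \<Longrightarrow>
          int (card {j \<in> {1..<s}. zs j = w}) = zorder (\<lambda>z. z ^ s - (pgf X z) ^ n) w"
    and Z0_zero: "Z0 ^ s - (pgf X Z0) ^ n = 0"
    and Z0_ann: "1 < norm Z0" "ereal (norm Z0) < R"
    and Z0_min: "\<And>z. z ^ s - (pgf X z) ^ n = 0 \<Longrightarrow> 1 < norm z \<Longrightarrow> ereal (norm z) < R \<Longrightarrow>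
                   norm Z0 \<le> norm z"
    and eps: "\<epsilon> > 0" "1 + \<epsilon> < norm Z0"
  defines "logP \<equiv> (\<lambda>Z. \<Sum>j\<in>{1..<s}. Ln (1 - zs j / Z))"
    and "I \<equiv> (\<lambda>Z. contour_integral (circlepath 0 (1 + \<epsilon>))
                 (\<lambda>z. Ln (1 - (pgf X z) ^ n / z ^ s) / (Z - z)) / (2 * of_real pi * \<i>))"
  shows "(\<forall>Z. 1 + \<epsilon> < norm Z \<and> ereal (norm Z) < R \<longrightarrow>
             logP Z = - Ln (1 - 1 / Z) + I Z)
       \<and> (\<forall>Z. 1 < norm Z \<and> norm Z < 1 + \<epsilon> \<longrightarrow>
             logP Z = - Ln (1 - 1 / Z) + Ln (1 - (pgf X Z) ^ n / Z ^ s) + I Z)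
       \<and> logP 1 = complex_of_real (ln (\<gamma> * sqrt (real s))) + I 1"
proof -
  interpret pgf_kernel X n s \<mu> "norm Z0" zs
  proof
    show "z ^ s - pgf X z ^ n \<noteq> 0" if "1 < norm z" "norm z < norm Z0" for z
      using Z0_min[of z] Z0_ann(2) that by (meson ereal_less_eq(3) le_less_trans less_imp_le not_le)
  qed (use aperiodic[of 1] R_gt1 Z0_ann R_def mean n_pos s_pos load zs_in zs_zeros
      in \<open>auto simp: one_ereal_def\<close>)
  obtain M where M: "M holomorphic_on ball 0 (norm Z0)"
    "\<And>w. norm w < norm Z0 \<Longrightarrow> exp (M w) = kernel_quotient w"
    "\<And>w. 1 < norm w \<Longrightarrow> norm w < norm Z0 \<Longrightarrow> log_kernel w = log_roots (1 / w) + M w"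
    by (rule log_kernel_decomposition) blast
  have I_eq: "I Z = (if 1 + \<epsilon> < norm Z then log_roots (1 / Z) else - M Z)"
    if "Z \<noteq> 0" "norm Z \<noteq> 1 + \<epsilon>" for Z
    using Cauchy_integral_log_kernel[OF M, of "1 + \<epsilon>" Z] that eps
    by (simp add: I_def log_kernel_def[abs_def])
  have log_roots_eq: "log_roots (1 / Z) = Ln (1 - 1 / Z) + logP Z" for Z
    by (simp add: log_roots_def logP_def)
  have "ln (\<gamma> * sqrt (real s)) = ln (real s - real n * \<mu>)"
    using s_pos by (simp add: gamma_def)
  with log_kernel_decomposition_at_1[OF M] I_eq[of 1] eps
  have "logP 1 = complex_of_real (ln (\<gamma> * sqrt (real s))) + I 1"
    by (simp add: logP_def) (metis add_diff_cancel_left')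
  moreover have "logP Z = - Ln (1 - 1 / Z) + I Z" if "1 + \<epsilon> < norm Z" for Z
    using I_eq[of Z] log_roots_eq[of Z] that eps by (cases "Z = 0") auto
  moreover have "logP Z = - Ln (1 - 1 / Z) + Ln (1 - pgf X Z ^ n / Z ^ s) + I Z"
    if "1 < norm Z" "norm Z < 1 + \<epsilon>" for Z
    using I_eq[of Z] log_roots_eq[of Z] M(3)[of Z] that eps
    by (cases "Z = 0") (auto simp: log_kernel_def)
  ultimately show ?thesis by auto
qed

end
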